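(* Let $K$ be a number field of degree $n_K$ and absolute discriminant $d_K$. Let $c,r,\eta$ be positive real numbers with $0<\eta\le\tfrac12$ and $$-\tfrac12<c-r<-\eta<1+\eta<c,$$ and let $T\ge 5/7$. With the notation below, \begin{align*} \int_{0}^\pi F_{c,r} (\theta)\, d\theta & \leq n_K \int_0^{\theta_{1 + \eta}} \log \zeta (\sigma)\, d \theta + \frac{1}{2(T+2)} \int_0^{\theta_{1 + \eta}} L_{-1}^{\star} (\theta)\, d\theta + {\theta_{1 + \eta}} \log (T+2)\\ & + n_K ( \log \zeta (1 + \eta)) (\theta_{-\eta} -\theta_{1 + \eta} ) + \Big( \log \frac{d_K(T+2)^{n_K}}{(2\pi)^{n_K}} \Big) \kappa_1 \\ & + \frac{n_K}{T+2}\kappa_4 + \frac{1}{2(T+2)} \int_{\theta_{1 + \eta}}^{\theta_{-\eta}} L_1^\star (\theta)\, d \theta +({\theta_{-\eta}} - {\theta_{1 + \eta}})\log (3(T+2))\\ & + n_K \int_{\theta_{-\eta}}^\pi \log \zeta (1 - \sigma)\, d\theta +\frac{1}{2(T+2)} \int_{\theta_{-\eta}}^\pi L_{-1}^\star (\theta )\, d \theta + (\pi -{\theta_{-\eta}})\log (T+2) + \frac{n_K}{T+2} \kappa_5, \end{align*} where inside the integrals $\sigma=c+r\cos\theta$.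
   Context: $\zeta$ is the Riemann zeta function. For $x\in\mathbb R$, $[x]$ is the integer closest to $x$ (ties broken toward $0$). For real $y$, $\theta_y=0$ if $c+r\le y$, $\theta_y=\arccos\frac{y-c}{r}$ if $c-r\le y\le c+r$, and $\theta_y=\pi$ if $y\le c-r$. For integers $j$, $$L_j(\theta)=\log\frac{(j+c+r\cos\theta)^2+(|r\sin\theta|+T)^2}{(T+2)^2},\qquad L^\star_j(\theta)=2r\sin\theta-4+\tfrac{7}{19}\big((j+c+r\cos\theta)^2+(r\sin\theta- 2)^2\big).$$ With $\sigma=c+r\cos\theta$: $\kappa_1=\int_{\theta_{1 + \eta}}^{\theta_{-\eta}} \frac{1+ \eta - \sigma}{2}\, d \theta + \int_{\theta_{-\eta}}^\pi \frac{1 - 2\sigma}{2}\, d \theta$, $\kappa_4=\frac{1}{4}\int_{\theta_{1+\eta}}^{\theta_{-\eta}}(1+\eta-\sigma)L^\star_1(\theta)\,d\theta$, $\kappa_5=\frac{1}{4}\int_{\theta_{-\eta}}^{\theta_{-1/2}}(1-2\sigma)L^\star_1(\theta)\,d\theta$. The function $F_{c,r}:[-\pi,\pi]\to\mathbb R$ is defined, with $\sigma=c+r\cos\theta$, by: for $\sigma\ge 1+\eta$, $F_{c,r}(\theta)=n_K\log\zeta(\sigma)+\frac12L_{-1}(\theta)+\log(T+2)$; for $-\eta\le\sigma<1+\eta$, $F_{c,r}(\theta)= n_K\log\zeta(1+\eta)+\frac{n_K(1+\eta-\sigma)+2}{4}L_1(\theta)+\frac{n_K(1+\eta-\sigma)+2}{2}\log(T+2)+\frac{1+\eta-\sigma}{2}\log\frac{d_K}{(2\pi)^{n_K}}+\log3$;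 for $\sigma<-\eta$, $F_{c,r}(\theta)= n_K\log\zeta(1-\sigma)+\frac{1}{2}L_{-1}(\theta)+\log(T+2)+\frac{1-2\sigma}{2}\log\Big(\frac{d_K(T+2)^{n_K}}{(2\pi)^{n_K}}\Big)+\frac{(1-2\sigma+2[\sigma])n_K}{4}L_{1-[\sigma]}(\theta)+\frac{n_K}{2}\sum_{j=1}^{-[\sigma]}L_{j-1}(\theta)$ (empty sum $=0$). *)

theory Defs
  imports "HOL-Analysis.Analysis"
begin

text \<open>Riemann zeta function on real arguments s > 1 (Dirichlet series); all uses below
  have argument > 1.\<close>
definition zeta_real :: "real \<Rightarrow> real" where
  "zeta_real s = (\<Sum>n. 1 / (real (Suc n)) powr s)"

text \<open>Nearest integer, ties broken toward 0.\<close>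
definition near_int :: "real \<Rightarrow> int" where
  "near_int x = (if x \<ge> 0 then \<lceil>x - 1/2\<rceil> else \<lfloor>x + 1/2\<rfloor>)"

definition theta_y :: "real \<Rightarrow> real \<Rightarrow> real \<Rightarrow> real" where
  "theta_y c r y = (if c + r \<le> y then 0
                    else if c - r \<le> y then arccos ((y - c) / r)
                    else pi)"

definition Lj :: "real \<Rightarrow> real \<Rightarrow> real \<Rightarrow> int \<Rightarrow> real \<Rightarrow> real" where
  "Lj c r T j \<theta> = ln (((of_int j + c + r * cos \<theta>)\<^sup>2 + (\<bar>r * sin \<theta>\<bar> + T)\<^sup>2) / (T + 2)\<^sup>2)"

definition Lstar :: "real \<Rightarrow> real \<Rightarrow> int \<Rightarrow> real \<Rightarrow> real" where
  "Lstar c r j \<theta> = 2 * r * sin \<theta> - 4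
     + 7/19 * ((of_int j + c + r * cos \<theta>)\<^sup>2 + (r * sin \<theta> - 2)\<^sup>2)"

definition kappa1 :: "real \<Rightarrow> real \<Rightarrow> real \<Rightarrow> real" where
  "kappa1 c r \<eta> =
     integral {theta_y c r (1 + \<eta>)..theta_y c r (-\<eta>)} (\<lambda>\<theta>. (1 + \<eta> - (c + r * cos \<theta>)) / 2)
   + integral {theta_y c r (-\<eta>)..pi} (\<lambda>\<theta>. (1 - 2 * (c + r * cos \<theta>)) / 2)"

definition kappa4 :: "real \<Rightarrow> real \<Rightarrow> real \<Rightarrow> real" where
  "kappa4 c r \<eta> = 1/4 *
     integral {theta_y c r (1 + \<eta>)..theta_y c r (-\<eta>)}
       (\<lambda>\<theta>. (1 + \<eta> - (c + r * cos \<theta>)) * Lstar c r 1 \<theta>)"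

definition kappa5 :: "real \<Rightarrow> real \<Rightarrow> real \<Rightarrow> real" where
  "kappa5 c r \<eta> = 1/4 *
     integral {theta_y c r (-\<eta>)..theta_y c r (-1/2)}
       (\<lambda>\<theta>. (1 - 2 * (c + r * cos \<theta>)) * Lstar c r 1 \<theta>)"

definition Fcr :: "nat \<Rightarrow> real \<Rightarrow> real \<Rightarrow> real \<Rightarrow> real \<Rightarrow> real \<Rightarrow> real \<Rightarrow> real" where
  "Fcr nK dK c r \<eta> T \<theta> =
    (let \<sigma> = c + r * cos \<theta> in
     if \<sigma> \<ge> 1 + \<eta> then
       real nK * ln (zeta_real \<sigma>) + 1/2 * Lj c r T (-1) \<theta> + ln (T + 2)
     else if -\<eta> \<le> \<sigma> then
       real nK * ln (zeta_real (1 + \<eta>))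
       + (real nK * (1 + \<eta> - \<sigma>) + 2) / 4 * Lj c r T 1 \<theta>
       + (real nK * (1 + \<eta> - \<sigma>) + 2) / 2 * ln (T + 2)
       + (1 + \<eta> - \<sigma>) / 2 * ln (dK / (2 * pi) ^ nK)
       + ln 3
     else
       real nK * ln (zeta_real (1 - \<sigma>)) + 1/2 * Lj c r T (-1) \<theta> + ln (T + 2)
       + (1 - 2 * \<sigma>) / 2 * ln (dK * (T + 2) ^ nK / (2 * pi) ^ nK)
       + (1 - 2 * \<sigma> + 2 * of_int (near_int \<sigma>)) * real nK / 4 * Lj c r T (1 - near_int \<sigma>) \<theta>
       + real nK / 2 * (\<Sum>j\<in>{1..- near_int \<sigma>}. Lj c r T (j - 1) \<theta>))"

end

(*
  As theta runs over [0, pi], sigma = c + r cos theta decreases from c + r > 1 + eta to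
  c - r in (-1/2, -eta).  It crosses 1 + eta at theta_{1+eta} and -eta at theta_{-eta}, so
  [0, pi] splits into three arcs, on each of which F_{c,r} is given by a single one of its
  three formulas (on the last arc [sigma] = 0, so the sum over j is empty).  On every arc the
  factors multiplying L_j are nonnegative, and L_j <= L*_j / (T + 2) for sin theta >= 0; this
  bounds F_{c,r} pointwise by the integrand of the corresponding terms of the right-hand side,
  and integrating arc by arc gives the inequality.
*)

theory Submission
  imports Defs
begin

text \<open>From \<open>ln x \<le> x - 1\<close>; the constant \<open>7/19 = 1/(5/7 + 2)\<close> absorbs the term of order
  \<open>1/(T + 2)\<^sup>2\<close>.\<close>
lemma Lj_le_Lstar:
  fixes c r T \<theta> :: real
  assumes T: "5/7 \<le> T" and nonneg: "0 \<le> r * sin \<theta>"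
  shows "Lj c r T j \<theta> \<le> Lstar c r j \<theta> / (T + 2)"
proof -
  define A where "A = (of_int j + c + r * cos \<theta>)\<^sup>2"
  define B where "B = r * sin \<theta>"
  define X where "X = A + (B - 2)\<^sup>2"
  define q where "q = (A + (B + T)\<^sup>2) / (T + 2)\<^sup>2"
  have "0 < T + 2" "0 \<le> X" using T by (auto simp: X_def A_def)
  have "0 < q" unfolding q_def A_def using T nonneg by (intro divide_pos_pos add_nonneg_pos) (auto simp: B_def)
  then have "Lj c r T j \<theta> \<le> q - 1"
    using nonneg ln_le_minus_one by (simp add: Lj_def q_def A_def B_def)
  also have "A + (B + T)\<^sup>2 = (T + 2)\<^sup>2 + (T + 2) * (2 * B - 4) + X"
    unfolding X_def by (simp add: power2_eq_square algebra_simps)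
  then have "q - 1 = (2 * B - 4) / (T + 2) + X / (T + 2) / (T + 2)"
    using \<open>0 < T + 2\<close> unfolding q_def by (simp add: add_divide_distrib power2_eq_square)
  also have "X / (T + 2) / (T + 2) \<le> 7/19 * (X / (T + 2))"
  proof -
    have "1 / (T + 2) \<le> 7/19" using T by (simp add: field_simps)
    then have "X / (T + 2) * (1 / (T + 2)) \<le> X / (T + 2) * (7/19)"
      using \<open>0 \<le> X\<close> \<open>0 < T + 2\<close> by (intro mult_left_mono) auto
    then show ?thesis by (simp add: mult.commute)
  qed
  also have "(2 * B - 4) / (T + 2) + 7/19 * (X / (T + 2)) = (2 * B - 4 + 7/19 * X) / (T + 2)"
    by (simp add: add_divide_distrib)
  also have "2 * B - 4 + 7/19 * X = Lstar c r j \<theta>"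
    by (simp add: Lstar_def X_def A_def B_def algebra_simps)
  finally show ?thesis by simp
qed

lemma summable_zeta_real: "1 < s \<Longrightarrow> summable (\<lambda>n. 1 / real (Suc n) powr s)"
  using summable_real_powr_iff[of "-s"] summable_Suc_iff[of "\<lambda>n. real n powr -s"]
  by (simp add: powr_minus divide_inverse)

lemma zeta_real_pos: "1 < s \<Longrightarrow> 0 < zeta_real s"
  unfolding zeta_real_def by (rule suminf_pos[OF summable_zeta_real]) auto

lemma zeta_real_antimono: "1 < s \<Longrightarrow> s \<le> t \<Longrightarrow> zeta_real t \<le> zeta_real s"
  unfolding zeta_real_def
  by (intro suminf_le divide_left_mono powr_mono summable_zeta_real) auto

lemma ln_zeta_real_antimono: "1 < s \<Longrightarrow> s \<le> t \<Longrightarrow> ln (zeta_real t) \<le> ln (zeta_real s)"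
  using zeta_real_antimono zeta_real_pos by simp

lemma integrable_on_antimono_on:
  fixes f :: "real \<Rightarrow> real"
  assumes "antimono_on {a..b} f"
  shows "f integrable_on {a..b}"
proof -
  have "mono_on {a..b} (\<lambda>x. - f x)"
    using assms by (auto simp: monotone_on_def)
  then show ?thesis
    using integrable_neg[OF integrable_on_mono_on] by fastforce
qed

lemma near_int_eq_0: "-1/2 < x \<Longrightarrow> x \<le> 1/2 \<Longrightarrow> near_int x = 0"
  unfolding near_int_def by (simp add: floor_eq_iff ceiling_eq_iff)

lemma continuous_on_Lj:
  assumes "0 < T"
  shows "continuous_on S (Lj c r T j)"
proof -
  have "\<bar>r * sin \<theta>\<bar> + T \<noteq> 0" for \<theta>
    using assms abs_ge_zero[of "r * sin \<theta>"] by linarith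
  then show ?thesis
    unfolding Lj_def[abs_def] using assms by (intro continuous_intros) auto
qed

lemma continuous_on_Lstar [continuous_intros]: "continuous_on S (Lstar c r j)"
  unfolding Lstar_def by (intro continuous_intros)

lemma Lstar_integrable_on: "Lstar c r j integrable_on {a..b}"
  by (intro integrable_continuous_interval continuous_on_Lstar)

lemma integrable_integral_le_spike_finite:
  fixes f g h :: "'a::euclidean_space \<Rightarrow> real"
  assumes "finite S" and "h integrable_on A" and "g integrable_on A"
    and "\<And>x. x \<in> A - S \<Longrightarrow> f x = h x" and "\<And>x. x \<in> A - S \<Longrightarrow> f x \<le> g x"
  shows "f integrable_on A" and "integral A f \<le> integral A g"
proof -
  show f: "f integrable_on A"
    using assms(1,4) by (rule integrable_spike_finite[OF _ _ assms(2)])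
  define g' where "g' x = (if x \<in> S then f x else g x)" for x
  have "g' integrable_on A"
    using assms(1) by (rule integrable_spike_finite[OF _ _ assms(3)]) (simp add: g'_def)
  then have "integral A f \<le> integral A g'"
    using f assms(5) by (intro integral_le) (auto simp: g'_def)
  also have "integral A g' = integral A g"
    using negligible_finite[OF assms(1)] by (rule integral_spike) (simp add: g'_def)
  finally show "integral A f \<le> integral A g" .
qed

lemma theta_y_bounds:
  assumes "0 < r"
  shows "0 \<le> theta_y c r y" and "theta_y c r y \<le> pi"
proof -
  have "-1 \<le> (y - c) / r" if "c - r \<le> y" using that assms by (simp add: field_simps)
  moreover have "(y - c) / r \<le> 1" if "y < c + r" using that assms by (simp add: field_simps)
  ultimately show "0 \<le> theta_y c r y" "theta_y c r y \<le> pi"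
    unfolding theta_y_def by (auto intro: arccos_lbound arccos_ubound)
qed

lemma theta_y_cos:
  assumes "0 < r" and "c - r \<le> y" and "y \<le> c + r"
  shows "c + r * cos (theta_y c r y) = y"
proof (cases "y = c + r")
  case False
  then have "-1 \<le> (y - c) / r" "(y - c) / r \<le> 1"
    using assms by (auto simp: field_simps)
  then show ?thesis
    using False assms by (simp add: theta_y_def cos_arccos)
qed (simp add: theta_y_def)

lemma le_cos_iff_le_theta_y:
  assumes "0 < r" and "c - r \<le> y" and "y \<le> c + r" and "0 \<le> \<theta>" and "\<theta> \<le> pi"
  shows "y \<le> c + r * cos \<theta> \<longleftrightarrow> \<theta> \<le> theta_y c r y"
proof -
  have "y \<le> c + r * cos \<theta> \<longleftrightarrow> cos (theta_y c r y) \<le> cos \<theta>"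
    using theta_y_cos[OF assms(1-3)] assms(1) by (metis add_le_cancel_left mult_le_cancel_left_pos)
  also have "\<dots> \<longleftrightarrow> \<theta> \<le> theta_y c r y"
    using assms theta_y_bounds[OF assms(1)] by (intro cos_mono_le_eq) auto
  finally show ?thesis .
qed

lemma theta_y_antimono:
  assumes "0 < r" and "c - r \<le> y" and "y \<le> y'" and "y' \<le> c + r"
  shows "theta_y c r y' \<le> theta_y c r y"
proof -
  let ?\<theta> = "theta_y c r y'"
  have "y \<le> c + r * cos ?\<theta>"
    using theta_y_cos[of r c y'] assms by simp
  then show ?thesis
    using assms theta_y_bounds[OF assms(1)] le_cos_iff_le_theta_y[of r c y ?\<theta>] by simp
qed

locale Fcr_setting =
  fixes nK :: nat and dK c r \<eta> T :: real
  assumes dK_pos: "0 < dK" and r_pos: "0 < r" and eta_pos: "0 < \<eta>"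
    and left_end: "-1/2 < c - r" "c - r < -\<eta>" and centre: "1 + \<eta> < c"
    and T_ge: "5/7 \<le> T"
begin

abbreviation \<sigma> :: "real \<Rightarrow> real" where "\<sigma> \<theta> \<equiv> c + r * cos \<theta>"
abbreviation F :: "real \<Rightarrow> real" where "F \<equiv> Fcr nK dK c r \<eta> T"
abbreviation \<theta>\<^sub>1 :: real where "\<theta>\<^sub>1 \<equiv> theta_y c r (1 + \<eta>)"
abbreviation \<theta>\<^sub>2 :: real where "\<theta>\<^sub>2 \<equiv> theta_y c r (-\<eta>)"
abbreviation log_conductor :: real where
  "log_conductor \<equiv> ln (dK * (T + 2) ^ nK / (2 * pi) ^ nK)"

lemma T_pos: "0 < T"
  using T_ge by simp

lemmas continuous_on_Lj_T [continuous_intros] = continuous_on_Lj[OF T_pos]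

lemma theta_1_nonneg: "0 \<le> \<theta>\<^sub>1"
  using theta_y_bounds r_pos by blast

lemma theta_1_le_theta_2: "\<theta>\<^sub>1 \<le> \<theta>\<^sub>2"
  using theta_y_antimono r_pos left_end centre eta_pos by simp

lemma theta_2_le_pi: "\<theta>\<^sub>2 \<le> pi"
  using theta_y_bounds r_pos by blast

lemma theta_2_nonneg: "0 \<le> \<theta>\<^sub>2"
  using theta_1_nonneg theta_1_le_theta_2 by linarith

lemma theta_1_le_pi: "\<theta>\<^sub>1 \<le> pi"
  using theta_1_le_theta_2 theta_2_le_pi by linarith

lemma theta_neg_half: "theta_y c r (-1/2) = pi"
  using left_end r_pos by (simp add: theta_y_def)

lemma sigma_gt_neg_half: "-1/2 < \<sigma> \<theta>"
  using left_end r_pos mult_left_mono[of "-1" "cos \<theta>" r] by simp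

lemma le_sigma_iff_theta_1: "\<theta> \<in> {0..pi} \<Longrightarrow> 1 + \<eta> \<le> \<sigma> \<theta> \<longleftrightarrow> \<theta> \<le> \<theta>\<^sub>1"
  using le_cos_iff_le_theta_y r_pos left_end centre eta_pos by simp

lemma le_sigma_iff_theta_2: "\<theta> \<in> {0..pi} \<Longrightarrow> -\<eta> \<le> \<sigma> \<theta> \<longleftrightarrow> \<theta> \<le> \<theta>\<^sub>2"
  using le_cos_iff_le_theta_y r_pos left_end centre eta_pos by simp

lemma sigma_le_neg_eta: "\<theta> \<in> {\<theta>\<^sub>2..pi} \<Longrightarrow> \<sigma> \<theta> \<le> -\<eta>"
proof -
  assume "\<theta> \<in> {\<theta>\<^sub>2..pi}"
  then have "cos \<theta> \<le> cos \<theta>\<^sub>2"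
    using theta_2_nonneg by (intro cos_monotone_0_pi_le) auto
  then have "\<sigma> \<theta> \<le> \<sigma> \<theta>\<^sub>2"
    using r_pos by simp
  also have "\<sigma> \<theta>\<^sub>2 = -\<eta>"
    using theta_y_cos r_pos left_end centre eta_pos by simp
  finally show ?thesis .
qed

lemma ln_zeta_sigma_integrable: "(\<lambda>\<theta>. ln (zeta_real (\<sigma> \<theta>))) integrable_on {0..\<theta>\<^sub>1}"
proof (intro integrable_on_mono_on mono_onI)
  fix x y assume "x \<in> {0..\<theta>\<^sub>1}" "y \<in> {0..\<theta>\<^sub>1}" "x \<le> y"
  then have "\<sigma> y \<le> \<sigma> x" and "1 + \<eta> \<le> \<sigma> y"
    using r_pos theta_1_le_pi le_sigma_iff_theta_1[of y] by (auto intro: cos_monotone_0_pi_le)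
  then show "ln (zeta_real (\<sigma> x)) \<le> ln (zeta_real (\<sigma> y))"
    using eta_pos by (intro ln_zeta_real_antimono) auto
qed

lemma ln_zeta_reflected_integrable: "(\<lambda>\<theta>. ln (zeta_real (1 - \<sigma> \<theta>))) integrable_on {\<theta>\<^sub>2..pi}"
proof (intro integrable_on_antimono_on monotone_onI)
  fix x y assume "x \<in> {\<theta>\<^sub>2..pi}" "y \<in> {\<theta>\<^sub>2..pi}" "x \<le> y"
  then have "\<sigma> y \<le> \<sigma> x" and "\<sigma> x \<le> -\<eta>"
    using r_pos theta_2_nonneg sigma_le_neg_eta[of x] by (auto intro: cos_monotone_0_pi_le)
  then show "ln (zeta_real (1 - \<sigma> y)) \<le> ln (zeta_real (1 - \<sigma> x))"
    using eta_pos by (intro ln_zeta_real_antimono) auto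
qed

lemma log_conductor_eq: "log_conductor = ln (dK / (2 * pi) ^ nK) + real nK * ln (T + 2)"
proof -
  have "log_conductor = ln (dK / (2 * pi) ^ nK * (T + 2) ^ nK)"
    by simp
  also have "\<dots> = ln (dK / (2 * pi) ^ nK) + ln ((T + 2) ^ nK)"
    using dK_pos T_pos by (intro ln_mult_pos) auto
  finally show ?thesis
    using T_pos by (simp add: ln_realpow)
qed

lemma Fcr_left_eq:
  assumes "\<sigma> \<theta> < -\<eta>"
  shows "F \<theta> = real nK * ln (zeta_real (1 - \<sigma> \<theta>)) + 1/2 * Lj c r T (-1) \<theta> + ln (T + 2)
    + (1 - 2 * \<sigma> \<theta>) / 2 * log_conductor + (1 - 2 * \<sigma> \<theta>) * real nK / 4 * Lj c r T 1 \<theta>"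
proof -
  have right: "\<not> 1 + \<eta> \<le> \<sigma> \<theta>" and strip: "\<not> -\<eta> \<le> \<sigma> \<theta>"
    using assms eta_pos by auto
  have "near_int (\<sigma> \<theta>) = 0"
    using assms eta_pos sigma_gt_neg_half by (intro near_int_eq_0) auto
  then show ?thesis
    unfolding Fcr_def Let_def if_not_P[OF right] if_not_P[OF strip] by simp
qed

lemma Lj_le_Lstar_on_upper_half: "\<theta> \<in> {0..pi} \<Longrightarrow> Lj c r T j \<theta> \<le> Lstar c r j \<theta> / (T + 2)"
  using T_ge r_pos by (intro Lj_le_Lstar mult_nonneg_nonneg sin_ge_zero) auto

lemma Fcr_right_le:
  assumes "\<theta> \<in> {0..pi}" and "1 + \<eta> \<le> \<sigma> \<theta>"
  shows "F \<theta> \<le> real nK * ln (zeta_real (\<sigma> \<theta>)) + 1 / (2 * (T + 2)) * Lstar c r (-1) \<theta> + ln (T + 2)"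
  using assms Lj_le_Lstar_on_upper_half[of \<theta> "-1"] T_pos by (simp add: Fcr_def Let_def field_simps)

lemma Fcr_strip_le:
  assumes "\<theta> \<in> {0..pi}" and "-\<eta> \<le> \<sigma> \<theta>" and "\<sigma> \<theta> < 1 + \<eta>"
  shows "F \<theta> \<le> real nK * ln (zeta_real (1 + \<eta>)) + log_conductor * ((1 + \<eta> - \<sigma> \<theta>) / 2)
    + real nK / (T + 2) * (1/4 * ((1 + \<eta> - \<sigma> \<theta>) * Lstar c r 1 \<theta>)) + 1 / (2 * (T + 2)) * Lstar c r 1 \<theta>
    + ln (3 * (T + 2))"
proof -
  let ?w = "1 + \<eta> - \<sigma> \<theta>"
  have "F \<theta> = real nK * ln (zeta_real (1 + \<eta>)) + (real nK * ?w + 2) / 4 * Lj c r T 1 \<theta>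
    + ((real nK * ?w + 2) / 2 * ln (T + 2) + ?w / 2 * ln (dK / (2 * pi) ^ nK) + ln 3)"
    using assms by (simp add: Fcr_def Let_def)
  moreover have "(real nK * ?w + 2) / 4 * Lj c r T 1 \<theta> \<le> (real nK * ?w + 2) / 4 * (Lstar c r 1 \<theta> / (T + 2))"
    using assms Lj_le_Lstar_on_upper_half by (intro mult_left_mono) auto
  moreover have "\<dots> = real nK / (T + 2) * (1/4 * (?w * Lstar c r 1 \<theta>)) + 1 / (2 * (T + 2)) * Lstar c r 1 \<theta>"
  proof -
    have e: "(n * w + 2) / 4 * (L / D) = n / D * (1/4 * (w * L)) + 1 / (2 * D) * L" if "0 < D" for n w L D :: real
      using that by (simp add: field_simps)
    show ?thesis
      using T_pos by (intro e) simp
  qed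
  moreover have "(real nK * ?w + 2) / 2 * ln (T + 2) + ?w / 2 * ln (dK / (2 * pi) ^ nK) + ln 3
      = log_conductor * (?w / 2) + ln (3 * (T + 2))"
  proof -
    have e: "(n * w + 2) / 2 * l + w / 2 * d + t = (d + n * l) * (w / 2) + (t + l)" for n w l d t :: real
      by (simp add: field_simps)
    have "ln (3 * (T + 2)) = ln 3 + ln (T + 2)"
      using T_pos ln_mult_pos[of 3 "T + 2"] by simp
    then show ?thesis
      unfolding log_conductor_eq by (simp only: e)
  qed
  ultimately show ?thesis
    by linarith
qed

lemma Fcr_left_le:
  assumes "\<theta> \<in> {0..pi}" and "\<sigma> \<theta> < -\<eta>"
  shows "F \<theta> \<le> real nK * ln (zeta_real (1 - \<sigma> \<theta>)) + 1 / (2 * (T + 2)) * Lstar c r (-1) \<theta> + ln (T + 2)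
    + log_conductor * ((1 - 2 * \<sigma> \<theta>) / 2) + real nK / (T + 2) * (1/4 * ((1 - 2 * \<sigma> \<theta>) * Lstar c r 1 \<theta>))"
proof -
  let ?w = "1 - 2 * \<sigma> \<theta>"
  have L: "Lj c r T j \<theta> \<le> Lstar c r j \<theta> / (T + 2)" for j
    using assms(1) by (rule Lj_le_Lstar_on_upper_half)
  have "1/2 * Lj c r T (-1) \<theta> \<le> 1/2 * (Lstar c r (-1) \<theta> / (T + 2))"
    using L by (intro mult_left_mono) auto
  moreover have "?w * real nK / 4 * Lj c r T 1 \<theta> \<le> ?w * real nK / 4 * (Lstar c r 1 \<theta> / (T + 2))"
    using assms eta_pos L by (intro mult_left_mono) auto
  moreover have "?w * real nK / 4 * (Lstar c r 1 \<theta> / (T + 2)) = real nK / (T + 2) * (1/4 * (?w * Lstar c r 1 \<theta>))"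
  proof -
    have e: "w * n / 4 * (L / D) = n / D * (1/4 * (w * L))" if "0 < D" for n w L D :: real
      using that by (simp add: field_simps)
    show ?thesis
      using T_pos by (intro e) simp
  qed
  moreover have "1/2 * (Lstar c r (-1) \<theta> / (T + 2)) = 1 / (2 * (T + 2)) * Lstar c r (-1) \<theta>"
    by simp
  moreover have "?w / 2 * log_conductor = log_conductor * (?w / 2)"
    by (rule mult.commute)
  ultimately show ?thesis
    using Fcr_left_eq[OF assms(2)] by linarith
qed

lemma integral_Fcr_right_le:
  shows "F integrable_on {0..\<theta>\<^sub>1}"
    and "integral {0..\<theta>\<^sub>1} F \<le> real nK * integral {0..\<theta>\<^sub>1} (\<lambda>\<theta>. ln (zeta_real (\<sigma> \<theta>)))
      + 1 / (2 * (T + 2)) * integral {0..\<theta>\<^sub>1} (Lstar c r (-1)) + \<theta>\<^sub>1 * ln (T + 2)"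
proof -
  let ?Z = "\<lambda>\<theta>. ln (zeta_real (\<sigma> \<theta>))"
  define h where "h \<theta> = real nK * ?Z \<theta> + 1/2 * Lj c r T (-1) \<theta> + ln (T + 2)" for \<theta>
  define g where "g \<theta> = real nK * ?Z \<theta> + 1 / (2 * (T + 2)) * Lstar c r (-1) \<theta> + ln (T + 2)" for \<theta>
  have Z: "?Z integrable_on {0..\<theta>\<^sub>1}"
    by (rule ln_zeta_sigma_integrable)
  have hI: "h integrable_on {0..\<theta>\<^sub>1}"
    unfolding h_def
    by (intro integrable_add integrable_on_mult_right Z) (auto intro!: integrable_continuous_interval continuous_intros)
  have gI: "g integrable_on {0..\<theta>\<^sub>1}"
    unfolding g_def using T_pos
    by (intro integrable_add integrable_on_mult_right Z) (auto intro!: integrable_continuous_interval continuous_intros)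
  have "F \<theta> = h \<theta>" "F \<theta> \<le> g \<theta>" if "\<theta> \<in> {0..\<theta>\<^sub>1} - {}" for \<theta>
  proof -
    have "\<theta> \<in> {0..pi}" "1 + \<eta> \<le> \<sigma> \<theta>"
      using that theta_1_le_pi le_sigma_iff_theta_1 by auto
    then show "F \<theta> = h \<theta>" "F \<theta> \<le> g \<theta>"
      unfolding h_def g_def using Fcr_right_le by (auto simp: Fcr_def)
  qed
  note spike = integrable_integral_le_spike_finite[OF finite.emptyI hI gI this]
  have "integral {0..\<theta>\<^sub>1} g = real nK * integral {0..\<theta>\<^sub>1} ?Z
      + 1 / (2 * (T + 2)) * integral {0..\<theta>\<^sub>1} (Lstar c r (-1)) + \<theta>\<^sub>1 * ln (T + 2)"
    unfolding g_def using Z theta_1_nonneg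
    by (simp add: integral_add integrable_add integrable_on_mult_right integrable_on_divide
        Lstar_integrable_on integrable_const_ivl)
  with spike show "F integrable_on {0..\<theta>\<^sub>1}" "integral {0..\<theta>\<^sub>1} F \<le> \<dots>"
    by simp_all
qed

lemma integral_Fcr_strip_le:
  shows "F integrable_on {\<theta>\<^sub>1..\<theta>\<^sub>2}"
    and "integral {\<theta>\<^sub>1..\<theta>\<^sub>2} F \<le> real nK * ln (zeta_real (1 + \<eta>)) * (\<theta>\<^sub>2 - \<theta>\<^sub>1)
      + log_conductor * integral {\<theta>\<^sub>1..\<theta>\<^sub>2} (\<lambda>\<theta>. (1 + \<eta> - \<sigma> \<theta>) / 2)
      + real nK / (T + 2) * kappa4 c r \<eta>
      + 1 / (2 * (T + 2)) * integral {\<theta>\<^sub>1..\<theta>\<^sub>2} (Lstar c r 1)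
      + (\<theta>\<^sub>2 - \<theta>\<^sub>1) * ln (3 * (T + 2))"
proof -
  let ?w = "\<lambda>\<theta>. 1 + \<eta> - \<sigma> \<theta>"
  define h where "h \<theta> = real nK * ln (zeta_real (1 + \<eta>)) + (real nK * ?w \<theta> + 2) / 4 * Lj c r T 1 \<theta>
    + (real nK * ?w \<theta> + 2) / 2 * ln (T + 2) + ?w \<theta> / 2 * ln (dK / (2 * pi) ^ nK) + ln 3" for \<theta>
  define g where "g \<theta> = real nK * ln (zeta_real (1 + \<eta>)) + log_conductor * (?w \<theta> / 2)
    + real nK / (T + 2) * (1/4 * (?w \<theta> * Lstar c r 1 \<theta>)) + 1 / (2 * (T + 2)) * Lstar c r 1 \<theta>
    + ln (3 * (T + 2))" for \<theta>
  have w: "(\<lambda>\<theta>. ?w \<theta> / 2) integrable_on {\<theta>\<^sub>1..\<theta>\<^sub>2}"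
    and wL: "(\<lambda>\<theta>. ?w \<theta> * Lstar c r 1 \<theta>) integrable_on {\<theta>\<^sub>1..\<theta>\<^sub>2}"
    by (auto intro!: integrable_continuous_interval continuous_intros)
  have hg: "h integrable_on {\<theta>\<^sub>1..\<theta>\<^sub>2}" "g integrable_on {\<theta>\<^sub>1..\<theta>\<^sub>2}"
    unfolding h_def g_def using T_pos by (auto intro!: integrable_continuous_interval continuous_intros)
  \<comment> \<open>At \<open>\<theta>\<^sub>1\<close> itself \<open>\<sigma> = 1 + \<eta>\<close>, where \<open>F\<close> takes its first branch.\<close>
  have "F \<theta> = h \<theta>" "F \<theta> \<le> g \<theta>" if "\<theta> \<in> {\<theta>\<^sub>1..\<theta>\<^sub>2} - {\<theta>\<^sub>1}" for \<theta>
  proof -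
    have "\<theta> \<in> {0..pi}" "\<sigma> \<theta> < 1 + \<eta>" "-\<eta> \<le> \<sigma> \<theta>"
      using that theta_1_nonneg theta_2_le_pi le_sigma_iff_theta_1 le_sigma_iff_theta_2
      by (auto simp: not_le[symmetric])
    then show "F \<theta> = h \<theta>" "F \<theta> \<le> g \<theta>"
      unfolding h_def g_def using Fcr_strip_le by (auto simp: Fcr_def Let_def)
  qed
  note spike = integrable_integral_le_spike_finite[where S = "{\<theta>\<^sub>1}", OF _ hg this]
  have "integral {\<theta>\<^sub>1..\<theta>\<^sub>2} g = real nK * ln (zeta_real (1 + \<eta>)) * (\<theta>\<^sub>2 - \<theta>\<^sub>1)
      + log_conductor * integral {\<theta>\<^sub>1..\<theta>\<^sub>2} (\<lambda>\<theta>. ?w \<theta> / 2)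
      + real nK / (T + 2) * kappa4 c r \<eta>
      + 1 / (2 * (T + 2)) * integral {\<theta>\<^sub>1..\<theta>\<^sub>2} (Lstar c r 1) + (\<theta>\<^sub>2 - \<theta>\<^sub>1) * ln (3 * (T + 2))"
    unfolding g_def kappa4_def using w wL theta_1_le_theta_2
    by (simp add: integral_add integrable_add integrable_on_mult_right integrable_on_divide
        Lstar_integrable_on integrable_const_ivl)
  with spike show "F integrable_on {\<theta>\<^sub>1..\<theta>\<^sub>2}" "integral {\<theta>\<^sub>1..\<theta>\<^sub>2} F \<le> \<dots>"
    by simp_all
qed

lemma integral_Fcr_left_le:
  shows "F integrable_on {\<theta>\<^sub>2..pi}"
    and "integral {\<theta>\<^sub>2..pi} F \<le> real nK * integral {\<theta>\<^sub>2..pi} (\<lambda>\<theta>. ln (zeta_real (1 - \<sigma> \<theta>)))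
      + 1 / (2 * (T + 2)) * integral {\<theta>\<^sub>2..pi} (Lstar c r (-1)) + (pi - \<theta>\<^sub>2) * ln (T + 2)
      + log_conductor * integral {\<theta>\<^sub>2..pi} (\<lambda>\<theta>. (1 - 2 * \<sigma> \<theta>) / 2)
      + real nK / (T + 2) * kappa5 c r \<eta>"
proof -
  let ?Z = "\<lambda>\<theta>. ln (zeta_real (1 - \<sigma> \<theta>))"
  let ?w = "\<lambda>\<theta>. 1 - 2 * \<sigma> \<theta>"
  define h where "h \<theta> = real nK * ?Z \<theta> + 1/2 * Lj c r T (-1) \<theta> + ln (T + 2)
    + ?w \<theta> / 2 * log_conductor + ?w \<theta> * real nK / 4 * Lj c r T 1 \<theta>" for \<theta>
  define g where "g \<theta> = real nK * ?Z \<theta> + 1 / (2 * (T + 2)) * Lstar c r (-1) \<theta> + ln (T + 2)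
    + log_conductor * (?w \<theta> / 2) + real nK / (T + 2) * (1/4 * (?w \<theta> * Lstar c r 1 \<theta>))" for \<theta>
  have Z: "?Z integrable_on {\<theta>\<^sub>2..pi}"
    by (rule ln_zeta_reflected_integrable)
  have w: "(\<lambda>\<theta>. ?w \<theta> / 2) integrable_on {\<theta>\<^sub>2..pi}"
    and wL: "(\<lambda>\<theta>. ?w \<theta> * Lstar c r 1 \<theta>) integrable_on {\<theta>\<^sub>2..pi}"
    by (auto intro!: integrable_continuous_interval continuous_intros)
  have hI: "h integrable_on {\<theta>\<^sub>2..pi}"
    unfolding h_def using T_pos
    by (intro integrable_add integrable_on_mult_right Z) (auto intro!: integrable_continuous_interval continuous_intros)
  have gI: "g integrable_on {\<theta>\<^sub>2..pi}"
    unfolding g_def using T_pos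
    by (intro integrable_add integrable_on_mult_right Z) (auto intro!: integrable_continuous_interval continuous_intros)
  have "F \<theta> = h \<theta>" "F \<theta> \<le> g \<theta>" if "\<theta> \<in> {\<theta>\<^sub>2..pi} - {\<theta>\<^sub>2}" for \<theta>
  proof -
    have "\<theta> \<in> {0..pi}" "\<sigma> \<theta> < -\<eta>"
      using that theta_2_nonneg le_sigma_iff_theta_2 by (auto simp: not_le[symmetric])
    then show "F \<theta> = h \<theta>" "F \<theta> \<le> g \<theta>"
      unfolding h_def g_def using Fcr_left_eq Fcr_left_le by auto
  qed
  note spike = integrable_integral_le_spike_finite[where S = "{\<theta>\<^sub>2}", OF _ hI gI this]
  have "integral {\<theta>\<^sub>2..pi} g = real nK * integral {\<theta>\<^sub>2..pi} ?Z
      + 1 / (2 * (T + 2)) * integral {\<theta>\<^sub>2..pi} (Lstar c r (-1)) + (pi - \<theta>\<^sub>2) * ln (T + 2)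
      + log_conductor * integral {\<theta>\<^sub>2..pi} (\<lambda>\<theta>. ?w \<theta> / 2)
      + real nK / (T + 2) * kappa5 c r \<eta>"
    unfolding g_def kappa5_def theta_neg_half using Z w wL theta_2_le_pi
    by (simp add: integral_add integrable_add integrable_on_mult_right integrable_on_divide
        Lstar_integrable_on integrable_const_ivl)
  with spike show "F integrable_on {\<theta>\<^sub>2..pi}" "integral {\<theta>\<^sub>2..pi} F \<le> \<dots>"
    by simp_all
qed

lemma integral_Fcr_split:
  "integral {0..pi} F = integral {0..\<theta>\<^sub>1} F + integral {\<theta>\<^sub>1..\<theta>\<^sub>2} F + integral {\<theta>\<^sub>2..pi} F"
proof -
  have F0: "F integrable_on {0..\<theta>\<^sub>2}"
    using theta_1_nonneg theta_1_le_theta_2 integral_Fcr_right_le(1) integral_Fcr_strip_le(1)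
    by (rule Henstock_Kurzweil_Integration.integrable_combine)
  have "integral {0..\<theta>\<^sub>1} F + integral {\<theta>\<^sub>1..\<theta>\<^sub>2} F = integral {0..\<theta>\<^sub>2} F"
    using theta_1_nonneg theta_1_le_theta_2 F0 by (rule Henstock_Kurzweil_Integration.integral_combine)
  moreover have "F integrable_on {0..pi}"
    using theta_2_nonneg theta_2_le_pi F0 integral_Fcr_left_le(1)
    by (rule Henstock_Kurzweil_Integration.integrable_combine)
  then have "integral {0..\<theta>\<^sub>2} F + integral {\<theta>\<^sub>2..pi} F = integral {0..pi} F"
    using theta_2_nonneg theta_2_le_pi by (intro Henstock_Kurzweil_Integration.integral_combine)
  ultimately show ?thesis
    by simp
qed

end

theorem proposition3p12:
  fixes nK :: nat and dK :: int and c r \<eta> T :: real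
  assumes nK: "nK \<ge> 1" and dK: "dK \<ge> 1"
    and pos: "c > 0" "r > 0" "\<eta> > 0" and eta: "\<eta> \<le> 1/2"
    and ineq: "-1/2 < c - r" "c - r < -\<eta>" "-\<eta> < 1 + \<eta>" "1 + \<eta> < c"
    and T: "T \<ge> 5/7"
  defines "th \<equiv> theta_y c r"
  shows "integral {0..pi} (Fcr nK (real_of_int dK) c r \<eta> T) \<le>
      real nK * integral {0..th (1 + \<eta>)} (\<lambda>\<theta>. ln (zeta_real (c + r * cos \<theta>)))
    + 1 / (2 * (T + 2)) * integral {0..th (1 + \<eta>)} (Lstar c r (-1))
    + th (1 + \<eta>) * ln (T + 2)
    + real nK * ln (zeta_real (1 + \<eta>)) * (th (-\<eta>) - th (1 + \<eta>))
    + ln (real_of_int dK * (T + 2) ^ nK / (2 * pi) ^ nK) * kappa1 c r \<eta>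
    + real nK / (T + 2) * kappa4 c r \<eta>
    + 1 / (2 * (T + 2)) * integral {th (1 + \<eta>)..th (-\<eta>)} (Lstar c r 1)
    + (th (-\<eta>) - th (1 + \<eta>)) * ln (3 * (T + 2))
    + real nK * integral {th (-\<eta>)..pi} (\<lambda>\<theta>. ln (zeta_real (1 - (c + r * cos \<theta>))))
    + 1 / (2 * (T + 2)) * integral {th (-\<eta>)..pi} (Lstar c r (-1))
    + (pi - th (-\<eta>)) * ln (T + 2)
    + real nK / (T + 2) * kappa5 c r \<eta>"
proof -
  interpret Fcr_setting nK "real_of_int dK" c r \<eta> T
    using dK pos ineq T by unfold_locales auto
  have "log_conductor * kappa1 c r \<eta> = log_conductor * integral {\<theta>\<^sub>1..\<theta>\<^sub>2} (\<lambda>\<theta>. (1 + \<eta> - \<sigma> \<theta>) / 2)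
      + log_conductor * integral {\<theta>\<^sub>2..pi} (\<lambda>\<theta>. (1 - 2 * \<sigma> \<theta>) / 2)"
    by (simp add: kappa1_def distrib_left)
  then show ?thesis
    unfolding th_def integral_Fcr_split
    using integral_Fcr_right_le(2) integral_Fcr_strip_le(2) integral_Fcr_left_le(2) by linarith
qed

end
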